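(* Let $D$ be a square-free integer, $p$ an odd prime, $k,\ell$ positive integers and $c_D$ a positive integer with $\gcd(c_D k, p) = 1$. Let $N = c_D k p^{\ell} - 1$ be an odd integer such that $c_D k < p^{\ell}$ and the Jacobi symbol satisfies $\left(\frac{D}{N}\right) = -1$. Suppose that there exists an element $w \in \mathcal{G}_N(D)$ such that $w^{\frac{N+1}{p}} \not\equiv 1 \pmod{N}$. Then $N$ is prime if and only if $$\Phi_p\left(w^{\frac{N+1}{p}}\right) \equiv 0 \pmod{N},$$ where $\Phi_p(x)$ denotes the $p$-th cyclotomic polynomial.
   Context: For an integer $n \ge 2$ and a square-free integer $D$: if $D \equiv 2,3 \pmod 4$, let $\mathcal{I}_n(D) = \{a + b\sqrt{D} : a,b \in \mathbb{Z}/n\mathbb{Z}\}$ (the ring $\mathbb{Z}[\sqrt D]/n\mathbb{Z}[\sqrt D]$) and $\mathcal{G}_n(D) = \{a + b\sqrt{D} \in \mathcal{I}_n(D) : a^2 - Db^2 \equiv 1 \pmod n\}$; if $D \equiv 1 \pmod 4$, let $\omega = \frac{1+\sqrt D}{2}$, $\mathcal{I}_n(D) = \{a + b\omega : a,b \in \mathbb{Z}/n\mathbb{Z}\}$ (the ring $\mathbb{Z}[\omega]/n\mathbb{Z}[\omega]$) and $\mathcal{G}_n(D) = \{a + b\omega \in \mathcal{I}_n(D) : a^2 + ab + \frac{1-D}{4} b^2 \equiv 1 \pmod n\}$. In both cases $\mathcal{I}_n(D)$ is the quotient ring $\mathcal{O}_L/n\mathcal{O}_L$ for $L=\mathbb{Q}(\sqrt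 D)$, $\mathcal{G}_n(D)$ is a multiplicative group, powers are computed in $\mathcal{I}_n(D)$, and a congruence $x \equiv y \pmod n$ for $x,y \in \mathcal{I}_n(D)$ means $x = y$ in $\mathcal{I}_n(D)$; polynomials such as $\Phi_p$ are evaluated in $\mathcal{I}_n(D)$. *)

theory Defs
  imports "HOL-Number_Theory.Number_Theory" "HOL-Computational_Algebra.Squarefree"
begin

text \<open>Elements of I_n(D) = O_L / n O_L are represented by integer pairs (a,b),
standing for a + b*sqrt D (if D mod 4 is 2 or 3) or a + b*omega, omega = (1+sqrt D)/2
(if D mod 4 = 1).\<close>

type_synonym qelt = "int \<times> int"

definition qeq :: "int \<Rightarrow> qelt \<Rightarrow> qelt \<Rightarrow> bool" where
  "qeq n x y \<longleftrightarrow> [fst x = fst y] (mod n) \<and> [snd x = snd y] (mod n)"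

definition qone :: qelt where "qone = (1, 0)"
definition qzero :: qelt where "qzero = (0, 0)"

definition qadd :: "int \<Rightarrow> qelt \<Rightarrow> qelt \<Rightarrow> qelt" where
  "qadd n x y = ((fst x + fst y) mod n, (snd x + snd y) mod n)"

text \<open>Multiplication: (sqrt D)^2 = D, resp. omega^2 = omega + (D-1)/4.\<close>
definition qmul :: "int \<Rightarrow> int \<Rightarrow> qelt \<Rightarrow> qelt \<Rightarrow> qelt" where
  "qmul D n x y =
     (let (a, b) = x; (c, d) = y in
      if D mod 4 = 1
      then ((a * c + b * d * ((D - 1) div 4)) mod n, (a * d + b * c + b * d) mod n)
      else ((a * c + D * b * d) mod n, (a * d + b * c) mod n))"

fun qpow :: "int \<Rightarrow> int \<Rightarrow> qelt \<Rightarrow> nat \<Rightarrow> qelt" where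
  "qpow D n x 0 = (1 mod n, 0)"
| "qpow D n x (Suc e) = qmul D n x (qpow D n x e)"

definition qnorm :: "int \<Rightarrow> qelt \<Rightarrow> int" where
  "qnorm D x = (let (a, b) = x in
     if D mod 4 = 1 then a^2 + a * b + ((1 - D) div 4) * b^2 else a^2 - D * b^2)"

definition inG :: "int \<Rightarrow> int \<Rightarrow> qelt \<Rightarrow> bool" where
  "inG D n x \<longleftrightarrow> [qnorm D x = 1] (mod n)"

definition cyclo_prime_eval :: "int \<Rightarrow> int \<Rightarrow> nat \<Rightarrow> qelt \<Rightarrow> qelt" where
  "cyclo_prime_eval D n p x = foldr (qadd n) (map (qpow D n x) [0..<p]) (0, 0)"

definition Jacobi :: "int \<Rightarrow> nat \<Rightarrow> int" where
  "Jacobi a n = prod_mset (image_mset (\<lambda>q. Legendre a (int q)) (prime_factorization n))"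

end

theory Submission
  imports Defs "HOL-Computational_Algebra.Polynomial"
begin

(* If N is prime, (D/N) = -1 makes O_L/N a field with N^2 elements on which the Frobenius
   x |-> x^N is conjugation, so w^(N+1) = norm w = 1. Hence u = w^((N+1)/p) is a p-th root
   of unity other than 1, and (u - 1) Phi_p(u) = u^p - 1 = 0 forces Phi_p(u) = 0.
   Conversely, let q be a prime factor of N. From Phi_p(u) = 0 mod q we get u^p = 1, and
   u <> 1 because otherwise q divides Phi_p(1) = p. So p^l divides the order of w modulo q.
   The Jacobi symbol excludes (D/q) = 0, and Frobenius gives w^(q-1) = 1 or w^(q+1) = 1
   modulo q according as (D/q) = 1 or -1; hence q > p^l. As N < (p^l + 1)^2, N is prime. *)

definition pcong :: "int \<Rightarrow> int poly \<Rightarrow> int poly \<Rightarrow> int poly \<Rightarrow> bool" where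
  "pcong n m f g \<longleftrightarrow> (\<exists>u v. f - g = smult n u + m * v)"

lemma pcongI_smult: "f - g = smult n h \<Longrightarrow> pcong n m f g"
  unfolding pcong_def by (metis add.right_neutral mult_zero_right)

lemma pcongI_mult: "f - g = m * h \<Longrightarrow> pcong n m f g"
  unfolding pcong_def by (metis add_0 smult_0_right)

lemma pcong_refl [simp]: "pcong n m f f"
  by (rule pcongI_smult[of _ _ _ 0]) simp

lemma pcong_iff_diff: "pcong n m f g \<longleftrightarrow> pcong n m (f - g) 0"
  by (simp add: pcong_def)

lemma pcong_sym: "pcong n m f g \<Longrightarrow> pcong n m g f"
proof -
  assume "pcong n m f g"
  then obtain u v where "f - g = smult n u + m * v"
    unfolding pcong_def by blast
  then have "g - f = smult n (- u) + m * (- v)"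
    by (simp add: algebra_simps)
  then show ?thesis
    unfolding pcong_def by blast
qed

lemma pcong_add: "pcong n m f g \<Longrightarrow> pcong n m f' g' \<Longrightarrow> pcong n m (f + f') (g + g')"
proof -
  assume "pcong n m f g" "pcong n m f' g'"
  then obtain u v u' v' where "f - g = smult n u + m * v" "f' - g' = smult n u' + m * v'"
    unfolding pcong_def by blast
  then have "f + f' - (g + g') = smult n (u + u') + m * (v + v')"
    by (simp add: algebra_simps smult_add_right)
  then show ?thesis
    unfolding pcong_def by blast
qed

lemma pcong_trans [trans]: "pcong n m f g \<Longrightarrow> pcong n m g h \<Longrightarrow> pcong n m f h"
  using pcong_add[of n m f g g h] by (simp add: pcong_def)

lemma pcong_mult_left: "pcong n m f g \<Longrightarrow> pcong n m (h * f) (h * g)"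
proof -
  assume "pcong n m f g"
  then obtain u v where "f - g = smult n u + m * v"
    unfolding pcong_def by blast
  then have "h * f - h * g = smult n (h * u) + m * (h * v)"
    by (simp add: algebra_simps right_diff_distrib[symmetric])
  then show ?thesis
    unfolding pcong_def by blast
qed

lemma pcong_mult: "pcong n m f g \<Longrightarrow> pcong n m f' g' \<Longrightarrow> pcong n m (f * f') (g * g')"
  by (metis pcong_mult_left pcong_trans mult.commute)

lemma pcong_power: "pcong n m f g \<Longrightarrow> pcong n m (f ^ k) (g ^ k)"
  by (induction k) (simp_all add: pcong_mult)

lemma pcong_sum: "(\<And>i. i \<in> A \<Longrightarrow> pcong n m (f i) (g i)) \<Longrightarrow> pcong n m (sum f A) (sum g A)"
  by (induction A rule: infinite_finite_induct) (simp_all add: pcong_add)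

lemma pcong_dvd_modulus: "pcong n m f g \<Longrightarrow> d dvd n \<Longrightarrow> pcong d m f g"
  unfolding pcong_def by (metis dvdE smult_smult)

lemma pcong_const: "[a = b] (mod n) \<Longrightarrow> pcong n m [:a:] [:b:]"
proof -
  assume "[a = b] (mod n)"
  then obtain k where "a - b = n * k"
    by (auto simp: cong_iff_dvd_diff elim!: dvdE)
  then have "[:a:] - [:b:] = smult n [:k:]"
    by simp
  then show ?thesis
    by (rule pcongI_smult)
qed

lemma pcong_smult_cong: "[a = b] (mod n) \<Longrightarrow> pcong n m (smult a f) (smult b f)"
  using pcong_mult[OF pcong_const pcong_refl] by simp

lemma pcong_smult: "pcong n m f g \<Longrightarrow> pcong n m (smult c f) (smult c g)"
  using pcong_mult_left[of n m f g "[:c:]"] by simp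

lemma pcong_smult_cancel:
  assumes "coprime c n" and "pcong n m (smult c f) (smult c g)"
  shows "pcong n m f g"
proof -
  obtain h where h: "[c * h = 1] (mod n)"
    using cong_solve_coprime_int assms(1) by blast
  have "pcong n m f (smult (c * h) f)"
    using pcong_smult_cong[OF cong_sym[OF h]] by simp
  also have "pcong n m (smult (c * h) f) (smult (c * h) g)"
    using pcong_mult_left[OF assms(2), of "[:h:]"] by (simp add: mult.commute)
  also have "pcong n m (smult (c * h) g) g"
    using pcong_smult_cong[OF h] by simp
  finally show ?thesis .
qed

lemma pcong_add_power_prime:
  fixes q :: nat
  assumes "prime q"
  shows "pcong (int q) m ((f + g) ^ q) (f ^ q + g ^ q)"
proof -
  have "pcong (int q) m (of_nat (q choose i) * f ^ i * g ^ (q - i))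
          ((if i = q then f ^ q else 0) + (if i = 0 then g ^ q else 0))" if "i \<le> q" for i
  proof (cases "i = 0 \<or> i = q")
    case True
    then show ?thesis
      using prime_gt_0_nat[OF assms] by auto
  next
    case False
    then have "q dvd q choose i"
      using that assms by (intro dvd_choose_prime) auto
    then obtain j where "q choose i = q * j" ..
    then have "of_nat (q choose i) * f ^ i * g ^ (q - i) = smult (int q) (of_nat j * f ^ i * g ^ (q - i))"
      by (simp add: of_nat_poly)
    then show ?thesis
      using False by (simp add: pcongI_smult)
  qed
  then have "pcong (int q) m (\<Sum>i\<le>q. of_nat (q choose i) * f ^ i * g ^ (q - i))
      (\<Sum>i\<le>q. (if i = q then f ^ q else 0) + (if i = 0 then g ^ q else 0))"
    by (intro pcong_sum) simp
  then show ?thesis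
    by (simp add: binomial_ring[of f g q] sum.distrib)
qed

lemma monic_div_mod:
  fixes f m :: "'a::comm_ring_1 poly"
  assumes "lead_coeff m = 1"
  obtains d r where "f = m * d + r" and "r = 0 \<or> degree r < degree m"
proof -
  obtain d r where "pseudo_divmod f m = (d, r)"
    by (cases "pseudo_divmod f m")
  with pseudo_divmod[of m f d r] assms that show ?thesis
    by force
qed

lemma pcong_zero_low_degree:
  assumes m: "lead_coeff m = 1" and deg: "degree f < degree m" and "pcong n m f 0"
  shows "n dvd coeff f i"
proof -
  obtain u v where fuv: "f = smult n u + m * v"
    using \<open>pcong n m f 0\<close> unfolding pcong_def by auto
  obtain d r where u: "u = m * d + r" and r: "r = 0 \<or> degree r < degree m"
    using monic_div_mod[OF m] .
  have eq: "f - smult n r = m * (smult n d + v)"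
    using fuv u by (simp add: algebra_simps smult_add_right)
  have "degree (f - smult n r) < degree m"
    using deg r by (auto intro: degree_diff_less le_less_trans[OF degree_smult_le])
  moreover have "m \<noteq> 0"
    using m by auto
  ultimately have "smult n d + v = 0"
    using eq degree_mult_eq[of m "smult n d + v"] by fastforce
  then have "f = smult n r"
    using eq by simp
  then show ?thesis
    by simp
qed

lemma pcong_power_one_dvd: "pcong n m (w ^ a) 1 \<Longrightarrow> a dvd b \<Longrightarrow> pcong n m (w ^ b) 1"
  by (auto elim!: dvdE simp: power_mult dest: pcong_power)

lemma pcong_power_one_gcd:
  assumes a: "pcong n m (w ^ a) 1" and b: "pcong n m (w ^ b) 1"
  shows "pcong n m (w ^ gcd a b) 1"
proof (cases "a = 0")
  case True
  then show ?thesis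
    using b by simp
next
  case False
  then obtain x y where xy: "a * x = b * y + gcd a b"
    using bezout_nat by blast
  have "pcong n m (w ^ gcd a b) (w ^ (b * y) * w ^ gcd a b)"
    using pcong_mult[OF pcong_sym[OF pcong_power_one_dvd[OF b]] pcong_refl] by simp
  also have "w ^ (b * y) * w ^ gcd a b = w ^ (a * x)"
    by (simp add: xy power_add)
  also have "pcong n m (w ^ (a * x)) 1"
    using pcong_power_one_dvd[OF a] by simp
  finally show ?thesis .
qed

lemma pcong_power_one_prime_power_dvd:
  assumes p: "prime p"
    and one: "pcong n m (w ^ (a * p ^ l)) 1"
    and not_one: "\<not> pcong n m (w ^ (a * p ^ (l - 1))) 1"
    and e: "pcong n m (w ^ e) 1"
  shows "p ^ l dvd e"
proof (rule ccontr)
  assume "\<not> p ^ l dvd e"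
  obtain i where i: "gcd (p ^ l) e = p ^ i" "i \<le> l"
    using divides_primepow_nat[OF p] gcd_dvd1 by blast
  moreover have "i \<noteq> l"
    using \<open>\<not> p ^ l dvd e\<close> i(1) by (metis gcd_dvd2)
  ultimately have "i \<le> l - 1"
    by linarith
  have "gcd (a * p ^ l) e dvd gcd (a * p ^ l) (a * e)"
    by simp
  also have "\<dots> = a * p ^ i"
    by (simp add: gcd_mult_distrib_nat[symmetric] i)
  also have "\<dots> dvd a * p ^ (l - 1)"
    using \<open>i \<le> l - 1\<close> by (simp add: le_imp_power_dvd)
  finally have "pcong n m (w ^ (a * p ^ (l - 1))) 1"
    using pcong_power_one_gcd[OF one e] pcong_power_one_dvd by blast
  with not_one show False ..
qed

lemma pcong_cyclotomic_zero_power: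
  "pcong n m (\<Sum>i<p. v ^ i) 0 \<Longrightarrow> pcong n m (v ^ p) 1"
  using pcong_mult_left[of n m "\<Sum>i<p. v ^ i" 0 "v - 1"]
  by (simp add: power_diff_1_eq pcong_iff_diff[of _ _ "v ^ p"])

lemma pcong_cyclotomic_zero_at_one:
  assumes "lead_coeff m = 1" "0 < degree m"
    and "pcong n m (\<Sum>i<p. v ^ i) 0" "pcong n m v 1"
  shows "n dvd int p"
proof -
  have "pcong n m (\<Sum>i<p. 1 ^ i) 0"
    using pcong_trans[OF pcong_sum[OF pcong_power[OF pcong_sym[OF assms(4)]]] assms(3)] by simp
  then have "pcong n m [:int p:] 0"
    by (simp add: of_nat_poly)
  from pcong_zero_low_degree[OF assms(1) _ this, of 0] show ?thesis
    using assms(2) by simp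
qed

text \<open>O_L = Z[theta] with theta = sqrt D or omega, and theta^2 = tr_gen D * theta - nm_gen D.
  Thus O_L/n is Z[X]/(n, gen_minpoly D), the pair (a, b) standing for a + b X, and ring
  identities in O_L/n become congruences in Z[X]. The element sqrt D is
  (1 + tr_gen D) * theta - tr_gen D.\<close>
definition tr_gen :: "int \<Rightarrow> int" where
  "tr_gen D = (if D mod 4 = 1 then 1 else 0)"

definition nm_gen :: "int \<Rightarrow> int" where
  "nm_gen D = (if D mod 4 = 1 then (1 - D) div 4 else - D)"

definition gen_minpoly :: "int \<Rightarrow> int poly" where
  "gen_minpoly D = [:nm_gen D, - tr_gen D, 1:]"

abbreviation qcong :: "int \<Rightarrow> int \<Rightarrow> int poly \<Rightarrow> int poly \<Rightarrow> bool" where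
  "qcong n D \<equiv> pcong n (gen_minpoly D)"

definition qelt_poly :: "qelt \<Rightarrow> int poly" where
  "qelt_poly x = [:fst x, snd x:]"

definition qconj :: "int \<Rightarrow> qelt \<Rightarrow> qelt" where
  "qconj D x = (fst x + tr_gen D * snd x, - snd x)"

definition sqrt_poly :: "int \<Rightarrow> int poly" where
  "sqrt_poly D = [:- tr_gen D, 1 + tr_gen D:]"

lemma tr_gen_cases: "tr_gen D = 0 \<or> tr_gen D = 1"
  by (simp add: tr_gen_def)

lemma tr_nm_gen_cases:
  obtains s t where "tr_gen D = s" "nm_gen D = t" "s = 0 \<and> t = - D \<or> s = 1 \<and> D = 1 - 4 * t"
proof -
  have "D mod 4 = 1 \<Longrightarrow> D = 1 - 4 * ((1 - D) div 4)"
    by presburger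
  then show ?thesis
    using that by (auto simp: tr_gen_def nm_gen_def)
qed

lemma coprime_tr_gen_odd: "odd q \<Longrightarrow> coprime (1 + tr_gen D) (int q)"
  using tr_gen_cases[of D] by auto

lemma gen_minpoly_monic [simp]: "lead_coeff (gen_minpoly D) = 1"
  and degree_gen_minpoly [simp]: "degree (gen_minpoly D) = 2"
  by (simp_all add: gen_minpoly_def)

lemma qelt_poly_qone [simp]: "qelt_poly qone = 1"
  and qelt_poly_qzero [simp]: "qelt_poly qzero = 0"
  by (simp_all add: qelt_poly_def qone_def qzero_def one_pCons)

lemma qeq_iff_qcong: "qeq n x y \<longleftrightarrow> qcong n D (qelt_poly x) (qelt_poly y)"
proof
  assume "qeq n x y"
  then obtain i j where "fst x - fst y = n * i" "snd x - snd y = n * j"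
    unfolding qeq_def cong_iff_dvd_diff by (auto elim!: dvdE)
  then have "qelt_poly x - qelt_poly y = smult n [:i, j:]"
    by (simp add: qelt_poly_def)
  then show "qcong n D (qelt_poly x) (qelt_poly y)"
    by (rule pcongI_smult)
next
  assume "qcong n D (qelt_poly x) (qelt_poly y)"
  moreover have "qelt_poly x - qelt_poly y = [:fst x - fst y, snd x - snd y:]"
    by (simp add: qelt_poly_def)
  ultimately have "qcong n D [:fst x - fst y, snd x - snd y:] 0"
    by (simp add: pcong_iff_diff[of _ _ "qelt_poly x"])
  moreover have "degree [:fst x - fst y, snd x - snd y:] < degree (gen_minpoly D)"
    by (rule le_less_trans[OF degree_pCons_le]) simp
  ultimately have "n dvd coeff [:fst x - fst y, snd x - snd y:] i" for i
    using pcong_zero_low_degree[OF gen_minpoly_monic] by blast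
  from this[of 0] this[of 1] show "qeq n x y"
    by (simp add: qeq_def cong_iff_dvd_diff)
qed

lemma qcong_qelt_poly_surj: "\<exists>x. qcong n D f (qelt_poly x)"
proof -
  obtain d r where f: "f = gen_minpoly D * d + r"
    and "r = 0 \<or> degree r < degree (gen_minpoly D)"
    by (rule monic_div_mod[OF gen_minpoly_monic])
  then have r: "r = 0 \<or> degree r < 2"
    by simp
  from f have "qcong n D f r"
    by (intro pcongI_mult[of _ _ _ d]) simp
  moreover have "r = qelt_poly (coeff r 0, coeff r 1)"
    using r by (auto intro!: poly_eqI simp: qelt_poly_def coeff_pCons coeff_eq_0 split: nat.split)
  ultimately show ?thesis
    by metis
qed

lemma qcong_mod_coeffs: "qcong n D [:a mod n, b mod n:] [:a, b:]"
  by (rule pcongI_smult[of _ _ _ "[:- (a div n), - (b div n):]"])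
     (simp add: minus_mod_eq_mult_div[symmetric] algebra_simps)

lemma qelt_poly_qadd: "qcong n D (qelt_poly (qadd n x y)) (qelt_poly x + qelt_poly y)"
  using qcong_mod_coeffs by (simp add: qadd_def qelt_poly_def)

lemma qelt_poly_qmul: "qcong n D (qelt_poly (qmul D n x y)) (qelt_poly x * qelt_poly y)"
proof -
  obtain a b c d where xy: "x = (a, b)" "y = (c, d)"
    by fastforce
  have "D mod 4 = 1 \<Longrightarrow> (D - 1) div 4 = - ((1 - D) div 4)"
    by presburger
  then have "qmul D n x y = ((a * c - nm_gen D * b * d) mod n, (a * d + b * c + tr_gen D * b * d) mod n)"
    by (simp add: xy qmul_def tr_gen_def nm_gen_def ac_simps)
  then have "qcong n D (qelt_poly (qmul D n x y)) [:a * c - nm_gen D * b * d, a * d + b * c + tr_gen D * b * d:]"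
    using qcong_mod_coeffs by (simp add: qelt_poly_def)
  also have "qcong n D \<dots> (qelt_poly x * qelt_poly y)"
    by (rule pcongI_mult[of _ _ _ "[:- b * d:]"]) (simp add: xy qelt_poly_def gen_minpoly_def algebra_simps)
  finally show ?thesis .
qed

lemma qelt_poly_qpow: "qcong n D (qelt_poly (qpow D n x e)) (qelt_poly x ^ e)"
proof (induction e)
  case 0
  then show ?case
    using qcong_mod_coeffs[of n D 1 0] by (simp add: qelt_poly_def one_pCons)
next
  case (Suc e)
  then show ?case
    using pcong_trans[OF qelt_poly_qmul pcong_mult[OF pcong_refl Suc.IH]] by simp
qed

lemma qelt_poly_foldr_qadd:
  "qcong n D (qelt_poly (foldr (qadd n) xs (0, 0))) (\<Sum>x\<leftarrow>xs. qelt_poly x)"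
proof (induction xs)
  case Nil
  then show ?case
    by (simp add: qelt_poly_def)
next
  case (Cons x xs)
  then show ?case
    using pcong_trans[OF qelt_poly_qadd pcong_add[OF pcong_refl Cons.IH]] by simp
qed

lemma qelt_poly_cyclo_prime_eval:
  "qcong n D (qelt_poly (cyclo_prime_eval D n p x)) (\<Sum>i<p. qelt_poly x ^ i)"
proof -
  have "qcong n D (qelt_poly (cyclo_prime_eval D n p x)) (\<Sum>i<p. qelt_poly (qpow D n x i))"
    using qelt_poly_foldr_qadd[of n D "map (qpow D n x) [0..<p]"]
    by (simp add: cyclo_prime_eval_def interv_sum_list_conv_sum_set_nat atLeast_upt[symmetric]
        lessThan_atLeast0 o_def)
  also have "qcong n D \<dots> (\<Sum>i<p. qelt_poly x ^ i)"
    by (intro pcong_sum qelt_poly_qpow)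
  finally show ?thesis .
qed

lemma qnorm_eq: "qnorm D x = fst x ^ 2 + tr_gen D * fst x * snd x + nm_gen D * snd x ^ 2"
  by (cases x) (simp add: qnorm_def tr_gen_def nm_gen_def)

lemma qnorm_scaled:
  "(1 + tr_gen D) ^ 2 * qnorm D x = ((1 + tr_gen D) * fst x + tr_gen D * snd x) ^ 2 - D * snd x ^ 2"
proof -
  obtain s t where st: "tr_gen D = s" "nm_gen D = t" "s = 0 \<and> t = - D \<or> s = 1 \<and> D = 1 - 4 * t"
    by (rule tr_nm_gen_cases)
  from st(3) show ?thesis
    unfolding qnorm_eq st(1,2)
  proof (elim disjE conjE)
    assume "s = 1" and D: "D = 1 - 4 * t"
    then show "(1 + s)\<^sup>2 * ((fst x)\<^sup>2 + s * fst x * snd x + t * (snd x)\<^sup>2) =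
        ((1 + s) * fst x + s * snd x)\<^sup>2 - D * (snd x)\<^sup>2"
      by (simp only: D) (simp add: power2_eq_square algebra_simps)
  qed (simp add: power2_eq_square algebra_simps)
qed

lemma qcong_qelt_poly_qconj: "qcong n D (qelt_poly x * qelt_poly (qconj D x)) [:qnorm D x:]"
  by (rule pcongI_mult[of _ _ _ "[:- (snd x ^ 2):]"])
     (simp add: qnorm_eq qelt_poly_def qconj_def gen_minpoly_def algebra_simps power2_eq_square)

lemma qcong_sqrt_poly_square: "qcong n D (sqrt_poly D ^ 2) [:D:]"
proof -
  obtain s t where st: "tr_gen D = s" "nm_gen D = t" "s = 0 \<and> t = - D \<or> s = 1 \<and> D = 1 - 4 * t"
    by (rule tr_nm_gen_cases)
  show ?thesis
    by (rule pcongI_mult[of _ _ _ "[:(1 + s) ^ 2:]"])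
       (use st(3) in \<open>auto simp: sqrt_poly_def gen_minpoly_def st(1,2) power2_eq_square algebra_simps\<close>)
qed

lemma qelt_poly_scaled:
  "smult (1 + tr_gen D) (qelt_poly x) =
     [:(1 + tr_gen D) * fst x + tr_gen D * snd x:] + smult (snd x) (sqrt_poly D)"
  by (simp add: qelt_poly_def sqrt_poly_def algebra_simps)

lemma qconj_scaled:
  "smult (1 + tr_gen D) (qelt_poly (qconj D x)) =
     [:(1 + tr_gen D) * fst x + tr_gen D * snd x:] - smult (snd x) (sqrt_poly D)"
  using tr_gen_cases[of D] by (auto simp: qelt_poly_def qconj_def sqrt_poly_def algebra_simps)

lemma fermat_int:
  fixes q :: nat
  assumes "prime q"
  shows "[a ^ q = a] (mod int q)"
proof (cases "coprime a (int q)")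
  case True
  have "residues (int q)"
    using prime_gt_1_nat[OF assms] by (simp add: residues_def)
  then have "[a ^ (q - 1) = 1] (mod int q)"
    using residues.euler_theorem[OF _ True] totient_prime[OF assms] by simp
  then have "[a ^ (q - 1) * a = 1 * a] (mod int q)"
    by (rule cong_mult) simp
  then show ?thesis
    using power_minus_mult[OF prime_gt_0_nat[OF assms], of a] by simp
next
  case False
  then have "int q dvd a"
    using prime_imp_coprime[of "int q" a] assms by (auto simp: coprime_commute)
  moreover have "a dvd a ^ q"
    using prime_gt_0_nat[OF assms] by (simp add: dvd_power)
  ultimately show ?thesis
    by (simp add: cong_iff_dvd_diff dvd_trans)
qed

lemma qcong_sqrt_poly_power_prime:
  fixes q :: nat
  assumes "prime q" "odd q"
  shows "qcong (int q) D (sqrt_poly D ^ q) (smult (Legendre D (int q)) (sqrt_poly D))"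
proof -
  have "2 < q"
    using prime_ge_2_nat[OF assms(1)] assms(2) by (cases "q = 2") auto
  define r where "r = (q - 1) div 2"
  have q: "q = Suc (2 * r)"
    using assms(2) unfolding r_def by presburger
  have "sqrt_poly D ^ q = sqrt_poly D * (sqrt_poly D ^ 2) ^ r"
    by (simp add: q power_mult)
  also have "qcong (int q) D \<dots> (sqrt_poly D * [:D ^ r:])"
    using pcong_mult[OF pcong_refl pcong_power[OF qcong_sqrt_poly_square]] by (simp add: poly_const_pow)
  also have "qcong (int q) D \<dots> (sqrt_poly D * [:Legendre D (int q):])"
    using euler_criterion[OF assms(1) \<open>2 < q\<close>, of D]
    by (intro pcong_mult pcong_refl pcong_const) (simp add: r_def cong_sym)
  finally show ?thesis
    by simp
qed

text \<open>By qelt_poly_scaled, the scaled element is a rational part plus a multiple of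
  sqrt D; Frobenius fixes the former and multiplies sqrt D by (D/q), by Euler's criterion.\<close>
lemma qcong_frobenius:
  fixes q :: nat
  assumes "prime q" "odd q"
  shows "qcong (int q) D (smult (1 + tr_gen D) (qelt_poly x ^ q))
           ([:(1 + tr_gen D) * fst x + tr_gen D * snd x:] +
            smult (Legendre D (int q) * snd x) (sqrt_poly D))"
proof -
  define c where "c = (1 + tr_gen D) * fst x + tr_gen D * snd x"
  define b where "b = snd x"
  define L where "L = Legendre D (int q)"
  have "qcong (int q) D (smult (1 + tr_gen D) (qelt_poly x ^ q))
      (smult ((1 + tr_gen D) ^ q) (qelt_poly x ^ q))"
    by (rule pcong_smult_cong[OF cong_sym[OF fermat_int[OF assms(1)]]])
  also have "\<dots> = smult (1 + tr_gen D) (qelt_poly x) ^ q"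
    by (simp add: smult_power)
  also have "\<dots> = ([:c:] + smult b (sqrt_poly D)) ^ q"
    by (simp add: qelt_poly_scaled c_def b_def)
  also have "qcong (int q) D \<dots> ([:c:] ^ q + smult b (sqrt_poly D) ^ q)"
    by (rule pcong_add_power_prime[OF assms(1)])
  also have "\<dots> = [:c ^ q:] + smult (b ^ q) (sqrt_poly D ^ q)"
    by (simp add: poly_const_pow smult_power)
  also have "qcong (int q) D \<dots> ([:c:] + smult (b ^ q) (smult L (sqrt_poly D)))"
    unfolding L_def
    by (intro pcong_add pcong_const pcong_smult fermat_int assms qcong_sqrt_poly_power_prime)
  also have "\<dots> = [:c:] + smult (b ^ q * L) (sqrt_poly D)"
    by simp
  also have "qcong (int q) D \<dots> ([:c:] + smult (b * L) (sqrt_poly D))"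
    by (intro pcong_add pcong_refl pcong_smult_cong cong_mult fermat_int assms cong_refl)
  finally show ?thesis
    by (simp add: c_def b_def L_def mult.commute)
qed

lemma qcong_frobenius_residue:
  fixes q :: nat
  assumes "prime q" "odd q" "Legendre D (int q) = 1"
  shows "qcong (int q) D (qelt_poly x ^ q) (qelt_poly x)"
proof (rule pcong_smult_cancel[OF coprime_tr_gen_odd[OF assms(2)]])
  show "qcong (int q) D (smult (1 + tr_gen D) (qelt_poly x ^ q)) (smult (1 + tr_gen D) (qelt_poly x))"
    using qcong_frobenius[OF assms(1,2), of D x] unfolding assms(3) qelt_poly_scaled by simp
qed

lemma qcong_frobenius_nonresidue:
  fixes q :: nat
  assumes "prime q" "odd q" "Legendre D (int q) = -1"
  shows "qcong (int q) D (qelt_poly x ^ q) (qelt_poly (qconj D x))"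
proof (rule pcong_smult_cancel[OF coprime_tr_gen_odd[OF assms(2)]])
  show "qcong (int q) D (smult (1 + tr_gen D) (qelt_poly x ^ q))
      (smult (1 + tr_gen D) (qelt_poly (qconj D x)))"
    using qcong_frobenius[OF assms(1,2), of D x] unfolding assms(3) qconj_scaled by simp
qed

lemma qcong_power_Suc_nonresidue:
  fixes q :: nat
  assumes "prime q" "odd q" "Legendre D (int q) = -1" "[qnorm D x = 1] (mod int q)"
  shows "qcong (int q) D (qelt_poly x ^ Suc q) 1"
proof -
  have "qelt_poly x ^ Suc q = qelt_poly x * qelt_poly x ^ q"
    by simp
  also have "qcong (int q) D \<dots> (qelt_poly x * qelt_poly (qconj D x))"
    by (intro pcong_mult pcong_refl qcong_frobenius_nonresidue assms)
  also have "qcong (int q) D \<dots> [:qnorm D x:]"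
    by (rule qcong_qelt_poly_qconj)
  also have "qcong (int q) D \<dots> [:1:]"
    by (rule pcong_const) (rule assms(4))
  finally show ?thesis
    by (simp add: pCons_one)
qed

lemma QuadRes_cancel_square:
  assumes "coprime c n" "[y ^ 2 = c ^ 2 * a] (mod n)"
  shows "QuadRes n a"
proof -
  obtain h where h: "[c * h = 1] (mod n)"
    using cong_solve_coprime_int assms(1) by blast
  have "[(y * h) ^ 2 = (c * h) ^ 2 * a] (mod n)"
    using cong_mult[OF assms(2) cong_refl[of "h ^ 2"]] by (simp add: power_mult_distrib ac_simps)
  also have "[(c * h) ^ 2 * a = 1 ^ 2 * a] (mod n)"
    using h by (intro cong_mult cong_pow cong_refl)
  finally show ?thesis
    unfolding QuadRes_def by auto
qed

lemma qnorm_not_dvd_nonresidue: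
  fixes q :: nat
  assumes q: "prime q" "odd q" and L: "Legendre D (int q) = -1"
    and x: "\<not> qeq (int q) x qzero"
  shows "\<not> int q dvd qnorm D x"
proof
  assume "int q dvd qnorm D x"
  define c where "c = (1 + tr_gen D) * fst x + tr_gen D * snd x"
  have "int q dvd (1 + tr_gen D) ^ 2 * qnorm D x"
    using \<open>int q dvd qnorm D x\<close> by (rule dvd_mult)
  then have "int q dvd c ^ 2 - D * snd x ^ 2"
    unfolding qnorm_scaled c_def .
  then have c2: "[c ^ 2 = snd x ^ 2 * D] (mod int q)"
    by (simp add: cong_iff_dvd_diff ac_simps)
  have pq: "prime (int q)"
    using q by simp
  show False
  proof (cases "int q dvd snd x")
    case True
    then have "int q dvd D * snd x ^ 2"
      by (simp add: power2_eq_square)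
    from dvd_add[OF \<open>int q dvd c ^ 2 - D * snd x ^ 2\<close> this] have "int q dvd c ^ 2"
      by simp
    then have "int q dvd c"
      using prime_dvd_power[OF pq] by blast
    then have "int q dvd (1 + tr_gen D) * fst x"
      using True by (simp add: c_def dvd_add_left_iff)
    then have "int q dvd fst x"
      using coprime_tr_gen_odd[OF q(2)] by (simp add: coprime_commute coprime_dvd_mult_right_iff)
    with True x show False
      by (simp add: qeq_def qzero_def cong_0_iff)
  next
    case False
    then have "coprime (int q) (snd x)"
      by (rule prime_imp_coprime[OF pq])
    then have "coprime (snd x) (int q)"
      by (rule coprime_commute[THEN iffD1])
    then have "QuadRes (int q) D"
      using c2 by (rule QuadRes_cancel_square)
    then show False
      using L by (simp add: Legendre_def split: if_splits)
  qed
qed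

lemma qcong_mult_cancel_nonresidue:
  fixes q :: nat
  assumes q: "prime q" "odd q" and L: "Legendre D (int q) = -1"
    and f: "\<not> qcong (int q) D f 0" and fz: "qcong (int q) D (f * z) 0"
  shows "qcong (int q) D z 0"
proof -
  obtain x where fx: "qcong (int q) D f (qelt_poly x)"
    using qcong_qelt_poly_surj by blast
  have "\<not> qeq (int q) x qzero"
    using f fx by (auto simp: qeq_iff_qcong[where D = D] dest: pcong_trans)
  then have "\<not> int q dvd qnorm D x"
    by (rule qnorm_not_dvd_nonresidue[OF q L])
  then have "coprime (int q) (qnorm D x)"
    using q by (intro prime_imp_coprime) simp_all
  then have cop: "coprime (qnorm D x) (int q)"
    by (rule coprime_commute[THEN iffD1])
  have "smult (qnorm D x) z = [:qnorm D x:] * z"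
    by simp
  also have "qcong (int q) D \<dots> (qelt_poly x * qelt_poly (qconj D x) * z)"
    by (intro pcong_mult pcong_refl pcong_sym[OF qcong_qelt_poly_qconj])
  also have "\<dots> = qelt_poly (qconj D x) * (qelt_poly x * z)"
    by (simp add: ac_simps)
  also have "qcong (int q) D \<dots> (qelt_poly (qconj D x) * (f * z))"
    by (intro pcong_mult pcong_refl pcong_sym[OF fx])
  also have "qcong (int q) D \<dots> (qelt_poly (qconj D x) * 0)"
    by (intro pcong_mult pcong_refl fz)
  finally have "qcong (int q) D (smult (qnorm D x) z) (smult (qnorm D x) 0)"
    by simp
  then show ?thesis
    by (rule pcong_smult_cancel[OF cop])
qed

lemma odd_dvd_Suc_or_pred_less:
  fixes P q :: nat
  assumes "odd P" "1 < P" "odd q" "1 < q" "P dvd q + 1 \<or> P dvd q - 1"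
  shows "P < q"
  using assms(5)
proof
  assume "P dvd q + 1"
  have "2 dvd q + 1"
    using assms(3) by simp
  moreover note \<open>P dvd q + 1\<close>
  moreover have "coprime 2 P"
    using assms(1) by simp
  ultimately have "2 * P dvd q + 1"
    by (rule divides_mult)
  then have "2 * P \<le> q + 1"
    by (rule dvd_imp_le) simp
  then show ?thesis
    using assms(2) by linarith
next
  assume "P dvd q - 1"
  then have "P \<le> q - 1"
    using assms(4) by (intro dvd_imp_le) simp_all
  then show ?thesis
    using assms(2) by linarith
qed

lemma prime_if_prime_factors_gt:
  fixes n P :: nat
  assumes "2 \<le> n" "n < (P + 1) ^ 2" and factors: "\<And>q. prime q \<Longrightarrow> q dvd n \<Longrightarrow> P < q"
  shows "prime n"
proof (rule ccontr)
  assume "\<not> prime n"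
  obtain q where q: "prime q" "q dvd n"
    using prime_factor_nat[of n] assms(1) by auto
  from q(2) obtain r where n: "n = q * r" ..
  with \<open>\<not> prime n\<close> q(1) assms(1) have "r \<noteq> 1" "r \<noteq> 0"
    by auto
  then obtain q' where q': "prime q'" "q' dvd r"
    using prime_factor_nat[of r] by auto
  have "P < q'"
    using factors[OF q'(1)] q'(2) n by simp
  also have "q' \<le> r"
    using dvd_imp_le[OF q'(2)] \<open>r \<noteq> 0\<close> by simp
  finally have "P + 1 \<le> r"
    by simp
  moreover have "P + 1 \<le> q"
    using factors[OF q] by simp
  ultimately have "(P + 1) ^ 2 \<le> n"
    unfolding n power2_eq_square by (rule mult_le_mono[rotated])
  with assms(2) show False
    by simp
qed

lemma Jacobi_prime: "prime n \<Longrightarrow> Jacobi a n = Legendre a (int n)"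
  by (simp add: Jacobi_def prime_factorization_prime)

lemma Legendre_nonzero_if_Jacobi_nonzero:
  assumes "Jacobi a n \<noteq> 0" "n \<noteq> 0" "prime q" "q dvd n"
  shows "Legendre a (int q) \<noteq> 0"
proof
  assume "Legendre a (int q) = 0"
  moreover have "q \<in># prime_factorization n"
    using assms(2-4) by (simp add: in_prime_factors_iff)
  ultimately show False
    using assms(1) by (force simp: Jacobi_def)
qed

lemma qeq_qpow_one_iff: "qeq n (qpow D n w m) qone \<longleftrightarrow> qcong n D (qelt_poly w ^ m) 1"
  using qelt_poly_qpow[of n D w m]
  by (auto simp: qeq_iff_qcong[where D = D] intro: pcong_trans pcong_sym)

lemma qeq_cyclo_prime_eval_zero_iff:
  "qeq n (cyclo_prime_eval D n p (qpow D n w m)) qzero \<longleftrightarrow>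
     qcong n D (\<Sum>i<p. (qelt_poly w ^ m) ^ i) 0"
proof -
  have "qcong n D (qelt_poly (cyclo_prime_eval D n p (qpow D n w m))) (\<Sum>i<p. (qelt_poly w ^ m) ^ i)"
    by (rule pcong_trans[OF qelt_poly_cyclo_prime_eval pcong_sum[OF pcong_power[OF qelt_poly_qpow]]])
  then show ?thesis
    by (auto simp: qeq_iff_qcong[where D = D] intro: pcong_trans pcong_sym)
qed

lemma cyclotomic_vanishes_if_prime:
  fixes n p m :: nat
  assumes n: "prime n" "odd n" and L: "Legendre D (int n) = -1"
    and norm: "[qnorm D w = 1] (mod int n)" and nm: "n + 1 = m * p"
    and not_one: "\<not> qcong (int n) D (qelt_poly w ^ m) 1"
  shows "qcong (int n) D (\<Sum>i<p. (qelt_poly w ^ m) ^ i) 0"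
proof (rule qcong_mult_cancel_nonresidue[OF n L])
  show "\<not> qcong (int n) D (qelt_poly w ^ m - 1) 0"
    using not_one pcong_iff_diff by blast
  have "(qelt_poly w ^ m - 1) * (\<Sum>i<p. (qelt_poly w ^ m) ^ i) = (qelt_poly w ^ m) ^ p - 1"
    by (rule power_diff_1_eq[symmetric])
  also have "\<dots> = qelt_poly w ^ Suc n - 1"
    by (simp only: power_mult[symmetric] nm[symmetric] Suc_eq_plus1)
  finally have "(qelt_poly w ^ m - 1) * (\<Sum>i<p. (qelt_poly w ^ m) ^ i) = qelt_poly w ^ Suc n - 1" .
  then show "qcong (int n) D ((qelt_poly w ^ m - 1) * (\<Sum>i<p. (qelt_poly w ^ m) ^ i)) 0"
    using qcong_power_Suc_nonresidue[OF n L norm] pcong_iff_diff by metis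
qed

lemma prime_factor_gt_prime_power:
  fixes q p l a :: nat
  assumes q: "prime q" "odd q" and p: "prime p" "odd p" "q \<noteq> p" and "0 < l"
    and L: "Legendre D (int q) \<noteq> 0" and norm: "[qnorm D w = 1] (mod int q)"
    and cyc: "qcong (int q) D (\<Sum>i<p. (qelt_poly w ^ (a * p ^ (l - 1))) ^ i) 0"
  shows "p ^ l < q"
proof -
  let ?W = "qelt_poly w"
  have one: "qcong (int q) D (?W ^ (a * p ^ l)) 1"
    using pcong_cyclotomic_zero_power[OF cyc] power_minus_mult[OF \<open>0 < l\<close>, of p]
    by (simp add: power_mult[symmetric] mult.assoc)
  have not_one: "\<not> qcong (int q) D (?W ^ (a * p ^ (l - 1))) 1"
  proof
    assume "qcong (int q) D (?W ^ (a * p ^ (l - 1))) 1"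
    then have "int q dvd int p"
      using pcong_cyclotomic_zero_at_one[OF gen_minpoly_monic _ cyc] by simp
    then show False
      using q p primes_dvd_imp_eq by auto
  qed
  have "a \<noteq> 0"
  proof
    assume "a = 0"
    with not_one show False
      by simp
  qed
  have order: "p ^ l dvd e" if "qcong (int q) D (?W ^ e) 1" for e
    by (rule pcong_power_one_prime_power_dvd[OF p(1) one not_one that])
  have "p ^ l dvd q + 1 \<or> p ^ l dvd q - 1"
  proof (cases "Legendre D (int q) = 1")
    case False
    with L have "Legendre D (int q) = -1"
      by (auto simp: Legendre_def split: if_splits)
    then show ?thesis
      using order qcong_power_Suc_nonresidue[OF q _ norm] by simp
  next
    case True
    have pos: "0 < q" "0 < a * p ^ l"
      using q p \<open>a \<noteq> 0\<close> by (simp_all add: prime_gt_0_nat)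
    have "qcong (int q) D (?W ^ (q - 1)) (?W ^ (q - 1) * ?W ^ (a * p ^ l))"
      using pcong_mult[OF pcong_refl pcong_sym[OF one]] by simp
    also have "q - 1 + a * p ^ l = q + (a * p ^ l - 1)"
      using pos by linarith
    then have "?W ^ (q - 1) * ?W ^ (a * p ^ l) = ?W ^ q * ?W ^ (a * p ^ l - 1)"
      by (simp only: power_add[symmetric])
    also have "qcong (int q) D \<dots> (?W * ?W ^ (a * p ^ l - 1))"
      by (intro pcong_mult pcong_refl qcong_frobenius_residue q True)
    also have "?W * ?W ^ (a * p ^ l - 1) = ?W ^ (a * p ^ l)"
      using pos by (simp add: power_Suc[symmetric])
    also have "qcong (int q) D \<dots> 1"
      by (rule one)
    finally show ?thesis
      using order by simp
  qed
  moreover have "1 < p ^ l"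
    by (rule one_less_power[OF prime_gt_1_nat[OF p(1)] \<open>0 < l\<close>])
  ultimately show ?thesis
    using odd_dvd_Suc_or_pred_less[of "p ^ l" q] p(2) q prime_gt_1_nat by simp
qed

lemma prime_if_cyclotomic_vanishes:
  fixes n p l a :: nat
  assumes p: "prime p" "odd p" and "0 < l"
    and n: "n + 1 = a * p ^ l" "a < p ^ l" "odd n"
    and L: "\<And>q. prime q \<Longrightarrow> q dvd n \<Longrightarrow> Legendre D (int q) \<noteq> 0"
    and norm: "[qnorm D w = 1] (mod int n)"
    and cyc: "qcong (int n) D (\<Sum>i<p. (qelt_poly w ^ (a * p ^ (l - 1))) ^ i) 0"
  shows "prime n"
proof (rule prime_if_prime_factors_gt)
  have "3 \<le> p"
    using prime_ge_2_nat[OF p(1)] p(2) by (cases "p = 2") auto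
  also have "p \<le> p ^ l"
    using \<open>0 < l\<close> prime_ge_1_nat[OF p(1)] by (rule self_le_power[rotated])
  also have "\<dots> \<le> a * p ^ l"
    using n(1) by (cases a) simp_all
  finally show "2 \<le> n"
    using n(1) by simp
  have "n < a * p ^ l"
    using n(1) by simp
  also have "\<dots> < p ^ l * p ^ l"
    using n(2) p(1) by (simp add: prime_gt_0_nat)
  also have "\<dots> \<le> (p ^ l + 1) ^ 2"
    unfolding power2_eq_square by (rule mult_le_mono) simp_all
  finally show "n < (p ^ l + 1) ^ 2" .
next
  fix q
  assume q: "prime q" "q dvd n"
  have "odd q"
    using q(2) n(3) dvd_trans by blast
  moreover have "q \<noteq> p"
  proof
    assume "q = p"
    have "p dvd p ^ l"
      using \<open>0 < l\<close> by (simp add: dvd_power)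
    then have "p dvd n + 1"
      unfolding n(1) by (rule dvd_mult)
    with q(2) \<open>q = p\<close> have "p dvd n + 1 - n"
      by (intro dvd_diff_nat) simp_all
    then have "p dvd 1"
      by simp
    with p(1) show False
      by simp
  qed
  ultimately show "p ^ l < q"
    using prime_factor_gt_prime_power[OF q(1) _ p _ \<open>0 < l\<close> L[OF q] cong_dvd_modulus[OF norm]
        pcong_dvd_modulus[OF cyc]] q(2) by simp
qed

lemma prime_iff_cyclotomic_vanishes:
  fixes n p l a :: nat
  assumes p: "prime p" "odd p" and "0 < l"
    and n: "n + 1 = a * p ^ l" "a < p ^ l" "odd n"
    and jacobi: "Jacobi D n = -1"
    and norm: "[qnorm D w = 1] (mod int n)"
    and not_one: "\<not> qcong (int n) D (qelt_poly w ^ (a * p ^ (l - 1))) 1"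
  shows "prime n \<longleftrightarrow> qcong (int n) D (\<Sum>i<p. (qelt_poly w ^ (a * p ^ (l - 1))) ^ i) 0"
proof
  assume "prime n"
  moreover have "n + 1 = a * p ^ (l - 1) * p"
    using power_minus_mult[OF \<open>0 < l\<close>, of p] n(1) by (simp add: mult.assoc)
  ultimately show "qcong (int n) D (\<Sum>i<p. (qelt_poly w ^ (a * p ^ (l - 1))) ^ i) 0"
    using cyclotomic_vanishes_if_prime[OF _ n(3) _ norm _ not_one] jacobi
    by (simp add: Jacobi_prime)
next
  assume "qcong (int n) D (\<Sum>i<p. (qelt_poly w ^ (a * p ^ (l - 1))) ^ i) 0"
  then show "prime n"
    using prime_if_cyclotomic_vanishes[OF p \<open>0 < l\<close> n _ norm]
      Legendre_nonzero_if_Jacobi_nonzero[of D n] jacobi odd_pos[OF n(3)]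
    by simp
qed

theorem theorem1p1:
  fixes D :: int and p k l c :: nat and N :: int and w :: qelt
  assumes "squarefree D"
    and "prime p" and "odd p"
    and "k > 0" and "l > 0" and "c > 0"
    and "coprime (c * k) p"
    and "N = int (c * k * p ^ l) - 1"
    and "odd N"
    and "c * k < p ^ l"
    and "Jacobi D (nat N) = -1"
    and "inG D N w"
    and "\<not> qeq N (qpow D N w (nat ((N + 1) div int p))) qone"
  shows "prime N \<longleftrightarrow>
           qeq N (cyclo_prime_eval D N p (qpow D N w (nat ((N + 1) div int p)))) qzero"
proof -
  define n where "n = c * k * p ^ l - 1"
  define m where "m = c * k * p ^ (l - 1)"
  have "0 < c * k * p ^ l"
    using assms(2,4,6) by (simp add: prime_gt_0_nat)
  then have n: "n + 1 = c * k * p ^ l"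
    by (simp add: n_def)
  have N: "N = int n"
    unfolding assms(8) n[symmetric] by simp
  have "int n + 1 = int m * int p"
    using n power_minus_mult[OF \<open>l > 0\<close>, of p] unfolding m_def
    by (metis of_nat_Suc of_nat_mult Suc_eq_plus1 add.commute mult.assoc)
  then have exp: "nat ((int n + 1) div int p) = m"
    using prime_gt_0_nat[OF \<open>prime p\<close>] by simp
  show ?thesis
    using prime_iff_cyclotomic_vanishes[OF assms(2,3,5) n assms(10), of D w] assms(9,11,12,13)
    by (simp add: N exp inG_def qeq_qpow_one_iff qeq_cyclo_prime_eval_zero_iff m_def)
qed

end
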